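(* Let $\mathcal{B}\subseteq\mathcal{P}(X)$ be a countable admissible algebra, let $\mathcal{S}\subseteq\mathcal{N}(\mathcal{B})$ be a countable collection and let $\varepsilon>0$. Then there is a set $A\subseteq X$ such that: (i) the algebra generated by $\mathcal{B}\cup\{A\}$ is admissible; (ii) for every $\{B_k\}_{k\in\omega}\in\mathcal{S}$ there is $k_0\in\omega$ such that $(B_{k_0})_{|n}\subseteq A_{|n}$ for all but finitely many $n\in\omega$; (iii) $\mu(A)\le\varepsilon$.
   Context: $\omega=\{0,1,2,\dots\}$, $2^\omega$ is the Cantor set, $\lambda$ is the usual product probability measure on $2^\omega$, and $\mathrm{Clop}(2^\omega)$ is the algebra of clopen subsets of $2^\omega$. Let $X=\omega\times 2^\omega$. For $B\subseteq X$ and $n\in\omega$, $B_{|n}=\{t\in 2^\omega:(n,t)\in B\}$. A set $B\subseteq X$ is admissible if $B_{|n}\in\mathrm{Clop}(2^\omega)$ for all $n\in\omega$ and $\lim_n\lambda(B_{|n})$ exists; in that case $\mu(B):=\lim_n\lambda(B_{|n})$. An algebra of subsets of $X$ is admissible if all its elements are admissible. For an admissible algebra $\mathcal{B}$, $\mathcal{N}(\mathcal{B})$ is the collection of all decreasing sequences $\{B_k\}_{k\in\omega}$ in $\mathcal{B}$ with $\lim_k\mu(B_k)=0$. *)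

theory Defs
  imports "HOL-Probability.Probability"
begin

(* The Cantor set 2^omega is the type nat => bool with the product topology
   (bool carries its discrete order topology). *)
type_synonym cantor = "nat \<Rightarrow> bool"

definition Clop :: "cantor set set" where
  "Clop = {A. open A \<and> closed A}"

definition cantor_measure :: "cantor measure" where
  "cantor_measure = (\<Pi>\<^sub>M i\<in>(UNIV::nat set). measure_pmf (bernoulli_pmf (1/2)))"

definition lam :: "cantor set \<Rightarrow> real" where
  "lam A = measure cantor_measure A"

(* X = omega x 2^omega; the n-th slice B_{|n} *)
definition slice :: "(nat \<times> cantor) set \<Rightarrow> nat \<Rightarrow> cantor set" where
  "slice B n = {t. (n, t) \<in> B}"

definition admissible :: "(nat \<times> cantor) set \<Rightarrow> bool" where
  "admissible B \<longleftrightarrow> (\<forall>n. slice B n \<in> Clop) \<and> convergent (\<lambda>n. lam (slice B n))"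

definition mu :: "(nat \<times> cantor) set \<Rightarrow> real" where
  "mu B = lim (\<lambda>n. lam (slice B n))"

definition admissible_algebra :: "(nat \<times> cantor) set set \<Rightarrow> bool" where
  "admissible_algebra \<B> \<longleftrightarrow> algebra UNIV \<B> \<and> (\<forall>B\<in>\<B>. admissible B)"

definition gen_algebra :: "(nat \<times> cantor) set set \<Rightarrow> (nat \<times> cantor) set set" where
  "gen_algebra G = \<Inter>{M. algebra UNIV M \<and> G \<subseteq> M}"

definition Nseq :: "(nat \<times> cantor) set set \<Rightarrow> (nat \<Rightarrow> (nat \<times> cantor) set) set" where
  "Nseq \<B> = {Bs. (\<forall>k. Bs k \<in> \<B>) \<and> decseq Bs \<and> (\<lambda>k. mu (Bs k)) \<longlonglongrightarrow> 0}"

end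

theory Submission imports Defs begin

text \<open>Enumerate \<S> as \<open>s\<^sub>0, s\<^sub>1, \<dots>\<close> and pick from \<open>s\<^sub>i\<close> a member \<open>T\<^sub>i \<in> \<B>\<close> whose slices
  eventually (from \<open>N\<^sub>i\<close> on) have measure at most \<open>\<epsilon>/2 \<cdot> 2\<^sup>-\<^sup>i\<close>. Let \<open>A\<close> be the union of the
  \<open>T\<^sub>i\<close>, each one admitted into the \<open>n\<close>-th slice only once \<open>n \<ge> max i N\<^sub>i\<close>. Every slice of \<open>A\<close>
  is a finite union of clopen sets of total measure at most \<open>\<epsilon>\<close>, and \<open>A\<close> eventually
  contains \<open>T\<^sub>i\<close>. Moreover, up to slices of measure at most \<open>\<epsilon> 2\<^sup>-\<^sup>m\<close>, \<open>A\<close> eventually agrees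
  with \<open>T\<^sub>0 \<union> \<dots> \<union> T\<^sub>m\<^sub>-\<^sub>1 \<in> \<B>\<close>; hence \<open>\<lambda>(C\<^sub>|\<^sub>n \<inter> A\<^sub>|\<^sub>n)\<close> is Cauchy for \<open>C \<in> \<B>\<close>. Since every
  member of the algebra generated by \<open>\<B> \<union> {A}\<close> has the form \<open>(C \<inter> A) \<union> (D - A)\<close> with
  \<open>C, D \<in> \<B>\<close>, that algebra is admissible.\<close>

instance bool :: second_countable_topology
proof
  show "\<exists>B::bool set set. countable B \<and> open = generate_topology B"
    by (intro exI[of _ "range lessThan \<union> range greaterThan"]) (auto simp: open_bool_def)
qed

lemma sets_cantor_measure: "sets cantor_measure = sets (borel :: cantor measure)"
proof -
  have "sets cantor_measure = sets (\<Pi>\<^sub>M i\<in>(UNIV::nat set). (borel :: bool measure))"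
    unfolding cantor_measure_def
    by (rule sets_PiM_cong) (auto simp: sets_borel_eq_count_space)
  also have "\<dots> = sets borel" by (rule sets_PiM_equal_borel)
  finally show ?thesis .
qed

lemma prob_space_cantor_measure: "prob_space cantor_measure"
  unfolding cantor_measure_def by (intro prob_space_PiM) (simp add: prob_space_measure_pmf)

interpretation cantor: prob_space cantor_measure
  by (rule prob_space_cantor_measure)

lemma Clop_sets: "A \<in> Clop \<Longrightarrow> A \<in> sets cantor_measure"
  unfolding Clop_def sets_cantor_measure by auto

lemma Clop_Int [intro]: "A \<in> Clop \<Longrightarrow> B \<in> Clop \<Longrightarrow> A \<inter> B \<in> Clop"
  and Clop_Un [intro]: "A \<in> Clop \<Longrightarrow> B \<in> Clop \<Longrightarrow> A \<union> B \<in> Clop"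
  and Clop_Diff [intro]: "A \<in> Clop \<Longrightarrow> B \<in> Clop \<Longrightarrow> A - B \<in> Clop"
  unfolding Clop_def by (auto intro: open_Diff closed_Diff)

lemma Clop_UN [intro]: "finite I \<Longrightarrow> (\<And>i. i \<in> I \<Longrightarrow> F i \<in> Clop) \<Longrightarrow> (\<Union>i\<in>I. F i) \<in> Clop"
  unfolding Clop_def by (auto intro: open_UN closed_UN)

lemma lam_mono: "A \<subseteq> B \<Longrightarrow> B \<in> Clop \<Longrightarrow> lam A \<le> lam B"
  unfolding lam_def by (intro cantor.finite_measure_mono) (auto intro: Clop_sets)

lemma lam_Diff: "B \<subseteq> A \<Longrightarrow> A \<in> Clop \<Longrightarrow> B \<in> Clop \<Longrightarrow> lam (A - B) = lam A - lam B"
  unfolding lam_def by (intro cantor.finite_measure_Diff) (auto intro: Clop_sets)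

lemma lam_disjoint_Un:
  "A \<inter> B = {} \<Longrightarrow> A \<in> Clop \<Longrightarrow> B \<in> Clop \<Longrightarrow> lam (A \<union> B) = lam A + lam B"
  unfolding lam_def by (intro cantor.finite_measure_Union) (auto intro: Clop_sets)

lemma lam_UN_le:
  "finite I \<Longrightarrow> (\<And>i. i \<in> I \<Longrightarrow> F i \<in> Clop) \<Longrightarrow> lam (\<Union>i\<in>I. F i) \<le> (\<Sum>i\<in>I. lam (F i))"
  unfolding lam_def by (intro cantor.finite_measure_subadditive_finite) (auto intro: Clop_sets)

lemma slice_Int: "slice (A \<inter> B) n = slice A n \<inter> slice B n"
  and slice_UN: "slice (\<Union>i\<in>I. F i) n = (\<Union>i\<in>I. slice (F i) n)"
  by (auto simp: slice_def)

lemma admissible_LIMSEQ_mu: "admissible B \<Longrightarrow> (\<lambda>n. lam (slice B n)) \<longlonglongrightarrow> mu B"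
  unfolding admissible_def mu_def by (simp add: convergent_LIMSEQ_iff)

lemma mu_le: "admissible B \<Longrightarrow> (\<And>n. lam (slice B n) \<le> c) \<Longrightarrow> mu B \<le> c"
  by (intro LIMSEQ_le_const2[OF admissible_LIMSEQ_mu]) auto

lemma eventually_lam_slice_less:
  assumes "admissible_algebra \<B>" and "Bs \<in> Nseq \<B>" and "\<delta> > 0"
  shows "\<exists>k N. \<forall>n\<ge>N. lam (slice (Bs k) n) < \<delta>"
proof -
  have "\<forall>\<^sub>F k in sequentially. mu (Bs k) < \<delta>"
    using assms(2,3) unfolding Nseq_def by (auto intro: order_tendstoD(2))
  then obtain k where k: "mu (Bs k) < \<delta>" by (auto simp: eventually_sequentially)
  have "admissible (Bs k)" using assms(1,2) by (simp add: Nseq_def admissible_algebra_def)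
  then have "\<forall>\<^sub>F n in sequentially. lam (slice (Bs k) n) < \<delta>"
    using k by (intro order_tendstoD(2)[OF admissible_LIMSEQ_mu])
  then show ?thesis by (auto simp: eventually_sequentially)
qed

lemma mu_empty: "mu {} = 0"
  unfolding mu_def by (rule limI) (simp add: slice_def lam_def)

lemma Nseq_empty: "algebra UNIV \<B> \<Longrightarrow> (\<lambda>k. {}) \<in> Nseq \<B>"
  unfolding Nseq_def by (simp add: algebra_iff_Un mu_empty decseq_def)

lemma sum_power_half_le:
  assumes "finite F" and "\<forall>i\<in>F. m \<le> i"
  shows "(\<Sum>i\<in>F. (1/2::real)^i) \<le> 2 * (1/2)^m"
proof -
  have "(\<Sum>i\<in>F. (1/2::real)^i) = (\<Sum>i\<in>(\<lambda>i. i - m) ` F. (1/2)^(i + m))"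
    using assms by (subst sum.reindex) (auto intro: inj_on_diff_nat)
  also have "\<dots> \<le> (\<Sum>i. (1/2)^(i + m))"
    using assms by (intro sum_le_suminf) (auto intro: summable_mult2 simp: power_add)
  also have "\<dots> = 2 * (1/2)^m"
    using suminf_geometric[of "1/2::real"] by (simp add: power_add suminf_mult2[symmetric])
  finally show ?thesis .
qed

lemma convergent_if_eventually_close:
  fixes f :: "nat \<Rightarrow> real"
  assumes "\<And>e. e > 0 \<Longrightarrow> \<exists>g. convergent g \<and> (\<forall>\<^sub>F n in sequentially. \<bar>f n - g n\<bar> \<le> e)"
  shows "convergent f"
proof -
  have "Cauchy f"
  proof (rule metric_CauchyI)
    fix e :: real assume "e > 0"
    then obtain g where g: "convergent g" "\<forall>\<^sub>F n in sequentially. \<bar>f n - g n\<bar> \<le> e/4"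
      using assms[of "e/4"] by auto
    obtain M1 where M1: "\<forall>m\<ge>M1. \<forall>n\<ge>M1. dist (g m) (g n) < e/4"
      using g(1) \<open>e > 0\<close>
      by (meson Cauchy_convergent_iff metric_CauchyD zero_less_divide_iff zero_less_numeral)
    obtain M2 where M2: "\<forall>n\<ge>M2. \<bar>f n - g n\<bar> \<le> e/4"
      using g(2) by (auto simp: eventually_sequentially)
    show "\<exists>M. \<forall>m\<ge>M. \<forall>n\<ge>M. dist (f m) (f n) < e"
    proof (intro exI allI impI)
      fix m n assume "max M1 M2 \<le> m" "max M1 M2 \<le> n"
      then have "dist (g m) (g n) < e/4" "\<bar>f n - g n\<bar> \<le> e/4" "\<bar>f m - g m\<bar> \<le> e/4"
        using M1 M2 by auto
      then show "dist (f m) (f n) < e" unfolding dist_real_def by arith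
    qed
  qed
  then show ?thesis by (simp add: Cauchy_convergent_iff)
qed

lemma algebra_gen_algebra: "algebra UNIV (gen_algebra G)"
  unfolding gen_algebra_def algebra_iff_Un by auto

lemma gen_algebra_least: "algebra UNIV M \<Longrightarrow> G \<subseteq> M \<Longrightarrow> gen_algebra G \<subseteq> M"
  unfolding gen_algebra_def by auto

lemma gen_algebra_superset: "G \<subseteq> gen_algebra G"
  unfolding gen_algebra_def by auto

lemma algebra_split_sets:
  assumes "algebra UNIV \<B>"
  shows "algebra UNIV {(C \<inter> A) \<union> (D - A) | C D. C \<in> \<B> \<and> D \<in> \<B>}"
  unfolding algebra_iff_Un
proof (intro conjI ballI)
  interpret algebra UNIV \<B> by (rule assms)
  have "{} = ({} \<inter> A) \<union> ({} - A)" by simp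
  then show "{} \<in> {(C \<inter> A) \<union> (D - A) | C D. C \<in> \<B> \<and> D \<in> \<B>}" by blast
  fix a b assume "a \<in> {(C \<inter> A) \<union> (D - A) | C D. C \<in> \<B> \<and> D \<in> \<B>}"
    and "b \<in> {(C \<inter> A) \<union> (D - A) | C D. C \<in> \<B> \<and> D \<in> \<B>}"
  then obtain C D C' D' where "C \<in> \<B>" "D \<in> \<B>" "a = (C \<inter> A) \<union> (D - A)"
    and "C' \<in> \<B>" "D' \<in> \<B>" "b = (C' \<inter> A) \<union> (D' - A)" by blast
  moreover have "UNIV - a = ((UNIV - C) \<inter> A) \<union> ((UNIV - D) - A)"
    and "a \<union> b = ((C \<union> C') \<inter> A) \<union> ((D \<union> D') - A)"
    using \<open>a = _\<close> \<open>b = _\<close> by blast+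
  ultimately show "UNIV - a \<in> {(C \<inter> A) \<union> (D - A) | C D. C \<in> \<B> \<and> D \<in> \<B>}"
    and "a \<union> b \<in> {(C \<inter> A) \<union> (D - A) | C D. C \<in> \<B> \<and> D \<in> \<B>}" by blast+
qed simp

lemma gen_algebra_insert_split:
  assumes "algebra UNIV \<B>" and "X \<in> gen_algebra (\<B> \<union> {A})"
  obtains C D where "C \<in> \<B>" "D \<in> \<B>" "X = (C \<inter> A) \<union> (D - A)"
proof -
  interpret algebra UNIV \<B> by (rule assms(1))
  have "C = (C \<inter> A) \<union> (C - A)" and "A = (UNIV \<inter> A) \<union> ({} - A)" for C by blast+
  then have "\<B> \<union> {A} \<subseteq> {(C \<inter> A) \<union> (D - A) | C D. C \<in> \<B> \<and> D \<in> \<B>}" by blast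
  from gen_algebra_least[OF algebra_split_sets[OF assms(1)] this] assms(2)
  have "X \<in> {(C \<inter> A) \<union> (D - A) | C D. C \<in> \<B> \<and> D \<in> \<B>}" by blast
  then show ?thesis using that by blast
qed

lemma convergent_lam_slice_Int:
  assumes "admissible_algebra \<B>" and "C \<in> \<B>" and A_clop: "\<And>n. slice A n \<in> Clop"
    and approx: "\<And>e. e > 0 \<Longrightarrow> \<exists>U\<in>\<B>. \<forall>\<^sub>F n in sequentially.
                   slice U n \<subseteq> slice A n \<and> lam (slice A n - slice U n) \<le> e"
  shows "convergent (\<lambda>n. lam (slice C n \<inter> slice A n))"
proof (rule convergent_if_eventually_close)
  interpret algebra UNIV \<B> using assms(1) by (simp add: admissible_algebra_def)
  have adm: "admissible X" if "X \<in> \<B>" for X using assms(1) that by (simp add: admissible_algebra_def)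
  fix e :: real assume "e > 0"
  then obtain U where "U \<in> \<B>" and U: "\<forall>\<^sub>F n in sequentially.
      slice U n \<subseteq> slice A n \<and> lam (slice A n - slice U n) \<le> e"
    using approx by blast
  have "C \<inter> U \<in> \<B>" using \<open>C \<in> \<B>\<close> \<open>U \<in> \<B>\<close> by blast
  then have "convergent (\<lambda>n. lam (slice (C \<inter> U) n))" using adm by (simp add: admissible_def)
  moreover have "\<forall>\<^sub>F n in sequentially. \<bar>lam (slice C n \<inter> slice A n) - lam (slice (C \<inter> U) n)\<bar> \<le> e"
    using U
  proof (rule eventually_mono, elim conjE)
    fix n assume sub: "slice U n \<subseteq> slice A n" and small: "lam (slice A n - slice U n) \<le> e"
    have clop: "slice C n \<in> Clop" "slice U n \<in> Clop"
      using adm \<open>C \<in> \<B>\<close> \<open>U \<in> \<B>\<close> by (auto simp: admissible_def)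
    have "lam (slice C n \<inter> slice A n) - lam (slice (C \<inter> U) n)
        = lam (slice C n \<inter> slice A n - slice C n \<inter> slice U n)"
      using sub clop A_clop by (subst lam_Diff) (auto simp: slice_Int)
    also have "\<dots> \<le> lam (slice A n - slice U n)"
      using clop A_clop by (intro lam_mono) auto
    finally have "lam (slice C n \<inter> slice A n) - lam (slice (C \<inter> U) n) \<le> e"
      using small by linarith
    moreover have "lam (slice (C \<inter> U) n) \<le> lam (slice C n \<inter> slice A n)"
      using sub clop A_clop by (intro lam_mono) (auto simp: slice_Int)
    ultimately show "\<bar>lam (slice C n \<inter> slice A n) - lam (slice (C \<inter> U) n)\<bar> \<le> e" by linarith
  qed
  ultimately show "\<exists>g. convergent g \<and> (\<forall>\<^sub>F n in sequentially. \<bar>lam (slice C n \<inter> slice A n) - g n\<bar> \<le> e)"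
    by blast
qed

lemma admissible_algebra_gen_algebra_insert:
  assumes "admissible_algebra \<B>" and A_clop: "\<And>n. slice A n \<in> Clop"
    and approx: "\<And>e. e > 0 \<Longrightarrow> \<exists>U\<in>\<B>. \<forall>\<^sub>F n in sequentially.
                   slice U n \<subseteq> slice A n \<and> lam (slice A n - slice U n) \<le> e"
  shows "admissible_algebra (gen_algebra (\<B> \<union> {A}))"
  unfolding admissible_algebra_def
proof (intro conjI ballI algebra_gen_algebra)
  have alg: "algebra UNIV \<B>" and adm: "\<And>X. X \<in> \<B> \<Longrightarrow> admissible X"
    using assms(1) by (auto simp: admissible_algebra_def)
  fix X assume "X \<in> gen_algebra (\<B> \<union> {A})"
  then obtain C D where "C \<in> \<B>" "D \<in> \<B>" and X: "X = (C \<inter> A) \<union> (D - A)"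
    using gen_algebra_insert_split[OF alg] by blast
  have clop: "slice C n \<in> Clop" "slice D n \<in> Clop" for n
    using adm \<open>C \<in> \<B>\<close> \<open>D \<in> \<B>\<close> by (auto simp: admissible_def)
  have slice_X: "slice X n = (slice C n \<inter> slice A n) \<union> (slice D n - slice D n \<inter> slice A n)" for n
    unfolding X by (auto simp: slice_def)
  have lam_D_Diff: "lam (slice D n - slice D n \<inter> slice A n) = lam (slice D n) - lam (slice D n \<inter> slice A n)" for n
    using clop A_clop by (intro lam_Diff) auto
  have "lam (slice X n) = lam (slice C n \<inter> slice A n) + (lam (slice D n) - lam (slice D n \<inter> slice A n))" for n
    unfolding slice_X lam_D_Diff[symmetric] using clop A_clop by (intro lam_disjoint_Un) blast+
  moreover have "convergent (\<lambda>n. lam (slice C n \<inter> slice A n) + (lam (slice D n) - lam (slice D n \<inter> slice A n)))"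
    using adm[OF \<open>D \<in> \<B>\<close>] convergent_lam_slice_Int[OF assms(1) _ A_clop approx] \<open>C \<in> \<B>\<close> \<open>D \<in> \<B>\<close>
    by (intro convergent_add convergent_diff) (auto simp: admissible_def)
  moreover have "slice X n \<in> Clop" for n
    unfolding slice_X using clop A_clop by blast
  ultimately show "admissible X" by (simp add: admissible_def)
qed

text \<open>The \<open>i\<close>-th set enters the \<open>n\<close>-th slice only when \<open>n \<ge> i\<close> and \<open>n \<ge> N i\<close>: the first
  condition keeps every slice a finite union, the second keeps the \<open>i\<close>-th contribution small.\<close>

definition diagonal_union :: "(nat \<Rightarrow> (nat \<times> cantor) set) \<Rightarrow> (nat \<Rightarrow> nat) \<Rightarrow> (nat \<times> cantor) set"
  where "diagonal_union T N = {(n, t). \<exists>i. i \<le> n \<and> N i \<le> n \<and> (n, t) \<in> T i}"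

lemma slice_diagonal_union:
  "slice (diagonal_union T N) n = (\<Union>i\<in>{i. i \<le> n \<and> N i \<le> n}. slice (T i) n)"
  by (auto simp: diagonal_union_def slice_def)

lemma Clop_slice_diagonal_union:
  "(\<And>i. slice (T i) n \<in> Clop) \<Longrightarrow> slice (diagonal_union T N) n \<in> Clop"
  unfolding slice_diagonal_union by (intro Clop_UN) auto

lemma eventually_slice_subset_diagonal_union:
  "\<forall>\<^sub>F n in sequentially. slice (T i) n \<subseteq> slice (diagonal_union T N) n"
  unfolding eventually_sequentially slice_diagonal_union
  by (intro exI[of _ "max i (N i)"]) auto

lemma lam_slice_diagonal_union_Diff_le:
  assumes clop: "\<And>i. slice (T i) n \<in> Clop"
    and small: "\<And>i. N i \<le> n \<Longrightarrow> lam (slice (T i) n) \<le> c * (1/2)^i" and "c \<ge> 0"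
  shows "lam (slice (diagonal_union T N) n - (\<Union>i<m. slice (T i) n)) \<le> 2 * c * (1/2)^m"
proof -
  define J where "J = {i. i \<le> n \<and> N i \<le> n \<and> m \<le> i}"
  have "finite J" unfolding J_def by (rule finite_subset[of _ "{..n}"]) auto
  have "slice (diagonal_union T N) n - (\<Union>i<m. slice (T i) n) \<subseteq> (\<Union>i\<in>J. slice (T i) n)"
    unfolding slice_diagonal_union J_def by auto (meson lessThan_iff not_less)
  then have "lam (slice (diagonal_union T N) n - (\<Union>i<m. slice (T i) n)) \<le> lam (\<Union>i\<in>J. slice (T i) n)"
    using \<open>finite J\<close> clop by (intro lam_mono) auto
  also have "\<dots> \<le> (\<Sum>i\<in>J. lam (slice (T i) n))"
    using \<open>finite J\<close> clop by (intro lam_UN_le)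
  also have "\<dots> \<le> (\<Sum>i\<in>J. c * (1/2)^i)"
    using small by (intro sum_mono) (auto simp: J_def)
  also have "\<dots> = c * (\<Sum>i\<in>J. (1/2)^i)"
    by (simp add: sum_distrib_left)
  also have "\<dots> \<le> c * (2 * (1/2)^m)"
    using \<open>finite J\<close> \<open>c \<ge> 0\<close> by (intro mult_left_mono sum_power_half_le) (auto simp: J_def)
  finally show ?thesis by simp
qed

lemma diagonal_union_approximable:
  assumes "algebra UNIV \<B>" and T: "\<And>i. T i \<in> \<B>" and clop: "\<And>i n. slice (T i) n \<in> Clop"
    and small: "\<And>i n. N i \<le> n \<Longrightarrow> lam (slice (T i) n) \<le> c * (1/2)^i" and "c \<ge> 0" and "e > 0"
  shows "\<exists>U\<in>\<B>. \<forall>\<^sub>F n in sequentially.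
           slice U n \<subseteq> slice (diagonal_union T N) n \<and> lam (slice (diagonal_union T N) n - slice U n) \<le> e"
proof -
  interpret algebra UNIV \<B> by (rule assms(1))
  obtain m where "(1/2::real)^m < e / (2 * c + 1)"
    using real_arch_pow_inv[of "e / (2 * c + 1)" "1/2"] \<open>e > 0\<close> \<open>c \<ge> 0\<close> by auto
  then have "2 * c * (1/2)^m \<le> e"
    using \<open>c \<ge> 0\<close> by (simp add: field_simps)
  then have small_tail: "lam (slice (diagonal_union T N) n - slice (\<Union>i<m. T i) n) \<le> e" for n
    using lam_slice_diagonal_union_Diff_le[where T=T and N=N and n=n and m=m] clop small \<open>c \<ge> 0\<close>
    by (force simp: slice_UN)
  have "\<forall>\<^sub>F n in sequentially. \<forall>i\<in>{..<m}. slice (T i) n \<subseteq> slice (diagonal_union T N) n"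
    by (intro eventually_ball_finite ballI eventually_slice_subset_diagonal_union) auto
  then have "\<forall>\<^sub>F n in sequentially. slice (\<Union>i<m. T i) n \<subseteq> slice (diagonal_union T N) n"
    by (rule eventually_mono) (auto simp: slice_UN)
  moreover have "(\<Union>i<m. T i) \<in> \<B>" using T by auto
  ultimately show ?thesis using small_tail by (auto elim!: eventually_mono)
qed

theorem lemma2p5:
  fixes \<B> :: "(nat \<times> cantor) set set"
    and \<S> :: "(nat \<Rightarrow> (nat \<times> cantor) set) set"
    and \<epsilon> :: real
  assumes "countable \<B>" and "admissible_algebra \<B>"
    and "countable \<S>" and "\<S> \<subseteq> Nseq \<B>"
    and "\<epsilon> > 0"
  shows "\<exists>A :: (nat \<times> cantor) set.
           admissible_algebra (gen_algebra (\<B> \<union> {A})) \<and>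
           (\<forall>Bs\<in>\<S>. \<exists>k0. \<forall>\<^sub>F n in sequentially. slice (Bs k0) n \<subseteq> slice A n) \<and>
           mu A \<le> \<epsilon>"
proof -
  have alg: "algebra UNIV \<B>" and adm: "\<And>C. C \<in> \<B> \<Longrightarrow> admissible C"
    using assms(2) by (auto simp: admissible_algebra_def)
  \<comment> \<open>The trivial sequence pads \<S>, since \<open>from_nat_into\<close> enumerates only nonempty sets.\<close>
  define s where "s = from_nat_into (insert (\<lambda>k. {}) \<S>)"
  have s_Nseq: "s i \<in> Nseq \<B>" for i
    unfolding s_def using from_nat_into[of "insert (\<lambda>k. {}) \<S>" i] Nseq_empty[OF alg] assms(4) by auto
  have \<S>_range: "\<S> \<subseteq> range s"
    unfolding s_def using subset_range_from_nat_into[of "insert (\<lambda>k. {}) \<S>"] assms(3) by auto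
  have "\<exists>k N. \<forall>n\<ge>N. lam (slice (s i k) n) < \<epsilon>/2 * (1/2)^i" for i
    by (rule eventually_lam_slice_less[OF assms(2) s_Nseq]) (use assms(5) in simp)
  then obtain k N where small: "\<And>i n. N i \<le> n \<Longrightarrow> lam (slice (s i (k i)) n) \<le> \<epsilon>/2 * (1/2)^i"
    by (metis less_le)
  define T where "T i = s i (k i)" for i
  have T: "T i \<in> \<B>" for i using s_Nseq by (simp add: T_def Nseq_def)
  then have clop: "slice (T i) n \<in> Clop" for i n using adm by (simp add: admissible_def)
  have small_T: "N i \<le> n \<Longrightarrow> lam (slice (T i) n) \<le> \<epsilon>/2 * (1/2)^i" for i n
    using small by (simp add: T_def)
  define A where "A = diagonal_union T N"
  have "admissible_algebra (gen_algebra (\<B> \<union> {A}))"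
    unfolding A_def using assms(5)
    by (intro admissible_algebra_gen_algebra_insert[OF assms(2)] Clop_slice_diagonal_union clop
        diagonal_union_approximable[OF alg T clop small_T]) auto
  moreover have "\<forall>Bs\<in>\<S>. \<exists>k0. \<forall>\<^sub>F n in sequentially. slice (Bs k0) n \<subseteq> slice A n"
  proof
    fix Bs assume "Bs \<in> \<S>"
    then obtain i where "Bs = s i" using \<S>_range by blast
    then show "\<exists>k0. \<forall>\<^sub>F n in sequentially. slice (Bs k0) n \<subseteq> slice A n"
      using eventually_slice_subset_diagonal_union[of T i N] by (auto simp: A_def T_def)
  qed
  moreover have "mu A \<le> \<epsilon>"
  proof (rule mu_le)
    show "admissible A"
      using calculation(1) gen_algebra_superset[of "\<B> \<union> {A}"] by (auto simp: admissible_algebra_def)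
    show "lam (slice A n) \<le> \<epsilon>" for n
      using lam_slice_diagonal_union_Diff_le[OF clop small_T, where m=0] assms(5) by (simp add: A_def)
  qed
  ultimately show ?thesis by blast
qed

end
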